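(* Let $\mathcal C$ be a category, let $\mathcal E$ be a category with sums, and let $F:\mathcal E\to\mathrm{Fam}\,\mathcal C$ be a sum-preserving discrete fibration. Then there are a category $\mathcal D$ and a discrete fibration $G:\mathcal D\to\mathcal C$ such that $\mathcal E$ is (equivalent to) $\mathrm{Fam}\,\mathcal D$ and $F$ is (identified under this equivalence with) $\mathrm{Fam}\,G$.
   Context: For a category $\mathcal C$, $\mathrm{Fam}\,\mathcal C$ is the category whose objects are families $A_i\ (i\in I)$ of objects of $\mathcal C$ indexed by a set $I$, and whose arrows $A_i\,(i\in I)\to B_j\,(j\in J)$ are a map $f:I\to J$ together with arrows $\alpha_i:A_i\to B_{fi}$ in $\mathcal C$. It is the free completion of $\mathcal C$ under sums. For a functor $G:\mathcal D\to\mathcal C$, $\mathrm{Fam}\,G:\mathrm{Fam}\,\mathcal D\to\mathrm{Fam}\,\mathcal C$ sends a family $A_i\,(i\in I)$ to $GA_i\,(i\in I)$ and an arrow $(f,\alpha_i)$ to $(f,G\alpha_i)$. A functor $F$ is a discrete fibration if every arrow into $FX$ has a unique lift with codomain $X$. *)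

theory Defs
  imports "HOL-Library.FuncSet"
begin

record ('o, 'a) category =
  Obj :: "'o set"
  Arr :: "'a set"
  Dom :: "'a \<Rightarrow> 'o"
  Cod :: "'a \<Rightarrow> 'o"
  Ident :: "'o \<Rightarrow> 'a"
  Comp :: "'a \<Rightarrow> 'a \<Rightarrow> 'a"   (* Comp C g f = g \<circ> f *)

definition hom :: "('o, 'a) category \<Rightarrow> 'o \<Rightarrow> 'o \<Rightarrow> 'a set" where
  "hom C X Y = {f \<in> Arr C. Dom C f = X \<and> Cod C f = Y}"

definition is_category :: "('o, 'a) category \<Rightarrow> bool" where
  "is_category C \<longleftrightarrow>
     (\<forall>f\<in>Arr C. Dom C f \<in> Obj C \<and> Cod C f \<in> Obj C) \<and>
     (\<forall>X\<in>Obj C. Ident C X \<in> hom C X X) \<and>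
     (\<forall>f\<in>Arr C. \<forall>g\<in>Arr C. Cod C f = Dom C g \<longrightarrow>
         Comp C g f \<in> hom C (Dom C f) (Cod C g)) \<and>
     (\<forall>f\<in>Arr C. Comp C (Ident C (Cod C f)) f = f \<and> Comp C f (Ident C (Dom C f)) = f) \<and>
     (\<forall>f\<in>Arr C. \<forall>g\<in>Arr C. \<forall>h\<in>Arr C. Cod C f = Dom C g \<longrightarrow> Cod C g = Dom C h \<longrightarrow>
         Comp C h (Comp C g f) = Comp C (Comp C h g) f)"

definition is_functor ::
  "('o, 'a) category \<Rightarrow> ('p, 'b) category \<Rightarrow> ('o \<Rightarrow> 'p) \<Rightarrow> ('a \<Rightarrow> 'b) \<Rightarrow> bool" where
  "is_functor C D Fo Fa \<longleftrightarrow>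
     is_category C \<and> is_category D \<and>
     (\<forall>X\<in>Obj C. Fo X \<in> Obj D) \<and>
     (\<forall>f\<in>Arr C. Fa f \<in> hom D (Fo (Dom C f)) (Fo (Cod C f))) \<and>
     (\<forall>X\<in>Obj C. Fa (Ident C X) = Ident D (Fo X)) \<and>
     (\<forall>f\<in>Arr C. \<forall>g\<in>Arr C. Cod C f = Dom C g \<longrightarrow> Fa (Comp C g f) = Comp D (Fa g) (Fa f))"

definition is_iso :: "('o, 'a) category \<Rightarrow> 'a \<Rightarrow> bool" where
  "is_iso C f \<longleftrightarrow> f \<in> Arr C \<and>
     (\<exists>g\<in>hom C (Cod C f) (Dom C f).
        Comp C g f = Ident C (Dom C f) \<and> Comp C f g = Ident C (Cod C f))"

definition nat_iso ::
  "('o, 'a) category \<Rightarrow> ('p, 'b) category \<Rightarrow> ('o \<Rightarrow> 'p) \<Rightarrow> ('a \<Rightarrow> 'b)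
     \<Rightarrow> ('o \<Rightarrow> 'p) \<Rightarrow> ('a \<Rightarrow> 'b) \<Rightarrow> ('o \<Rightarrow> 'b) \<Rightarrow> bool" where
  "nat_iso C D Fo Fa Go Ga phi \<longleftrightarrow>
     is_functor C D Fo Fa \<and> is_functor C D Go Ga \<and>
     (\<forall>X\<in>Obj C. phi X \<in> hom D (Fo X) (Go X) \<and> is_iso D (phi X)) \<and>
     (\<forall>f\<in>Arr C. Comp D (phi (Cod C f)) (Fa f) = Comp D (Ga f) (phi (Dom C f)))"

definition is_equivalence ::
  "('o, 'a) category \<Rightarrow> ('p, 'b) category \<Rightarrow> ('o \<Rightarrow> 'p) \<Rightarrow> ('a \<Rightarrow> 'b) \<Rightarrow> bool" where
  "is_equivalence C D Ko Ka \<longleftrightarrow>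
     (\<exists>Lo La eta eps.
        is_functor C D Ko Ka \<and> is_functor D C Lo La \<and>
        nat_iso C C id id (Lo \<circ> Ko) (La \<circ> Ka) eta \<and>
        nat_iso D D id id (Ko \<circ> Lo) (Ka \<circ> La) eps)"

definition is_coproduct ::
  "('o, 'a) category \<Rightarrow> 'i set \<Rightarrow> ('i \<Rightarrow> 'o) \<Rightarrow> 'o \<Rightarrow> ('i \<Rightarrow> 'a) \<Rightarrow> bool" where
  "is_coproduct C I X S cinj \<longleftrightarrow>
     S \<in> Obj C \<and> (\<forall>i\<in>I. cinj i \<in> hom C (X i) S) \<and>
     (\<forall>Y\<in>Obj C. \<forall>g. (\<forall>i\<in>I. g i \<in> hom C (X i) Y) \<longrightarrow>
        (\<exists>!h. h \<in> hom C S Y \<and> (\<forall>i\<in>I. Comp C h (cinj i) = g i)))"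

definition has_sums :: "('o, 'a) category \<Rightarrow> 'i itself \<Rightarrow> bool" where
  "has_sums C (_ :: 'i itself) \<longleftrightarrow>
     (\<forall>(I :: 'i set) X. (\<forall>i\<in>I. X i \<in> Obj C) \<longrightarrow> (\<exists>S cinj. is_coproduct C I X S cinj))"

definition preserves_sums ::
  "('o, 'a) category \<Rightarrow> ('p, 'b) category \<Rightarrow> ('o \<Rightarrow> 'p) \<Rightarrow> ('a \<Rightarrow> 'b) \<Rightarrow> 'i itself \<Rightarrow> bool" where
  "preserves_sums C D Fo Fa (_ :: 'i itself) \<longleftrightarrow>
     (\<forall>(I :: 'i set) X S cinj. (\<forall>i\<in>I. X i \<in> Obj C) \<longrightarrow> is_coproduct C I X S cinj \<longrightarrow>
        is_coproduct D I (Fo \<circ> X) (Fo S) (Fa \<circ> cinj))"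

definition is_discrete_fibration ::
  "('o, 'a) category \<Rightarrow> ('p, 'b) category \<Rightarrow> ('o \<Rightarrow> 'p) \<Rightarrow> ('a \<Rightarrow> 'b) \<Rightarrow> bool" where
  "is_discrete_fibration E C Fo Fa \<longleftrightarrow>
     is_functor E C Fo Fa \<and>
     (\<forall>X\<in>Obj E. \<forall>u\<in>Arr C. Cod C u = Fo X \<longrightarrow>
        (\<exists>!e. e \<in> Arr E \<and> Cod E e = X \<and> Fa e = u))"

type_synonym ('i, 'o) fam_obj = "'i set \<times> ('i \<Rightarrow> 'o)"
type_synonym ('i, 'o, 'a) fam_arr =
  "('i, 'o) fam_obj \<times> ('i, 'o) fam_obj \<times> ('i \<Rightarrow> 'i) \<times> ('i \<Rightarrow> 'a)"

definition Fam_Obj :: "('o, 'a) category \<Rightarrow> ('i, 'o) fam_obj set" where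
  "Fam_Obj C = {(I, A). A \<in> I \<rightarrow>\<^sub>E Obj C}"

definition Fam :: "('o, 'a) category \<Rightarrow> (('i, 'o) fam_obj, ('i, 'o, 'a) fam_arr) category" where
  "Fam C = \<lparr>
     Obj = Fam_Obj C,
     Arr = {((I, A), (J, B), f, \<alpha>). (I, A) \<in> Fam_Obj C \<and> (J, B) \<in> Fam_Obj C \<and>
              f \<in> I \<rightarrow>\<^sub>E J \<and> \<alpha> \<in> extensional I \<and> (\<forall>i\<in>I. \<alpha> i \<in> hom C (A i) (B (f i)))},
     Dom = (\<lambda>(s, t, f, \<alpha>). s),
     Cod = (\<lambda>(s, t, f, \<alpha>). t),
     Ident = (\<lambda>(I, A). ((I, A), (I, A), (\<lambda>i\<in>I. i), (\<lambda>i\<in>I. Ident C (A i)))),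
     Comp = (\<lambda>(s2, t2, g, \<beta>) (s1, t1, f, \<alpha>).
               (s1, t2, (\<lambda>i\<in>fst s1. g (f i)), (\<lambda>i\<in>fst s1. Comp C (\<beta> (f i)) (\<alpha> i)))) \<rparr>"

definition Fam_fo :: "('o \<Rightarrow> 'p) \<Rightarrow> ('i, 'o) fam_obj \<Rightarrow> ('i, 'p) fam_obj" where
  "Fam_fo Go = (\<lambda>(I, A). (I, (\<lambda>i\<in>I. Go (A i))))"

definition Fam_fa :: "('o \<Rightarrow> 'p) \<Rightarrow> ('a \<Rightarrow> 'b) \<Rightarrow> ('i, 'o, 'a) fam_arr \<Rightarrow> ('i, 'p, 'b) fam_arr" where
  "Fam_fa Go Ga = (\<lambda>(s, t, f, \<alpha>). (Fam_fo Go s, Fam_fo Go t, f, (\<lambda>i\<in>fst s. Ga (\<alpha> i))))"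

end

theory Submission
  imports Defs
begin

text \<open>
  Fix an index i0 and let D be the full subcategory of E on the objects that F sends to one-element
  families, with G reading off the single member. An object X over a family A indexed by I has,
  for every i in I, a unique lift of the i-th coprojection of Fam C; its domain, the component X i,
  lies in D, and every arrow of E induces arrows between components. Since lifts are unique, the
  coprojections of X are jointly epic, and X is in fact the sum of its components: if S is their
  sum, a lift of the canonical arrow Fo X \<rightarrow> Fo S is a section of the comparison arrow
  S \<rightarrow> X. Hence X \<mapsto> (X i) is full and faithful as a functor E \<rightarrow> Fam D; it is
  surjective on objects because a family of objects of D is recovered as the domain of a lift of
  the copairing into their sum. Finally, Fam G sends (X i) back to Fo X on the nose.
\<close>

lemma in_hom: "f \<in> hom C X Y \<longleftrightarrow> f \<in> Arr C \<and> Dom C f = X \<and> Cod C f = Y"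
  by (simp add: hom_def)

lemma cat_dom_obj: "is_category C \<Longrightarrow> f \<in> Arr C \<Longrightarrow> Dom C f \<in> Obj C"
  and cat_cod_obj: "is_category C \<Longrightarrow> f \<in> Arr C \<Longrightarrow> Cod C f \<in> Obj C"
  and cat_id_arr: "is_category C \<Longrightarrow> X \<in> Obj C \<Longrightarrow> Ident C X \<in> Arr C"
  and cat_id_dom: "is_category C \<Longrightarrow> X \<in> Obj C \<Longrightarrow> Dom C (Ident C X) = X"
  and cat_id_cod: "is_category C \<Longrightarrow> X \<in> Obj C \<Longrightarrow> Cod C (Ident C X) = X"
  and cat_comp_arr: "is_category C \<Longrightarrow> f \<in> Arr C \<Longrightarrow> g \<in> Arr C \<Longrightarrow> Cod C f = Dom C g \<Longrightarrow>
    Comp C g f \<in> Arr C"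
  and cat_comp_dom: "is_category C \<Longrightarrow> f \<in> Arr C \<Longrightarrow> g \<in> Arr C \<Longrightarrow> Cod C f = Dom C g \<Longrightarrow>
    Dom C (Comp C g f) = Dom C f"
  and cat_comp_cod: "is_category C \<Longrightarrow> f \<in> Arr C \<Longrightarrow> g \<in> Arr C \<Longrightarrow> Cod C f = Dom C g \<Longrightarrow>
    Cod C (Comp C g f) = Cod C g"
  and cat_assoc: "is_category C \<Longrightarrow> f \<in> Arr C \<Longrightarrow> g \<in> Arr C \<Longrightarrow> h \<in> Arr C \<Longrightarrow>
    Cod C f = Dom C g \<Longrightarrow> Cod C g = Dom C h \<Longrightarrow> Comp C h (Comp C g f) = Comp C (Comp C h g) f"
  unfolding is_category_def hom_def by blast+

lemma cat_id_left: "is_category C \<Longrightarrow> f \<in> Arr C \<Longrightarrow> Cod C f = Y \<Longrightarrow> Comp C (Ident C Y) f = f"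
  and cat_id_right: "is_category C \<Longrightarrow> f \<in> Arr C \<Longrightarrow> Dom C f = X \<Longrightarrow> Comp C f (Ident C X) = f"
  unfolding is_category_def by blast+

lemmas cat_simps = cat_id_left cat_id_right cat_dom_obj cat_cod_obj cat_id_arr cat_id_dom cat_id_cod
  cat_comp_arr cat_comp_dom cat_comp_cod

lemma functorD:
  assumes "is_functor A B Fo Fa"
  shows "is_category A" "is_category B"
    "X \<in> Obj A \<Longrightarrow> Fo X \<in> Obj B"
    "f \<in> Arr A \<Longrightarrow> Fa f \<in> Arr B"
    "f \<in> Arr A \<Longrightarrow> Dom B (Fa f) = Fo (Dom A f)"
    "f \<in> Arr A \<Longrightarrow> Cod B (Fa f) = Fo (Cod A f)"
    "X \<in> Obj A \<Longrightarrow> Fa (Ident A X) = Ident B (Fo X)"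
    "f \<in> Arr A \<Longrightarrow> g \<in> Arr A \<Longrightarrow> Cod A f = Dom A g \<Longrightarrow> Fa (Comp A g f) = Comp B (Fa g) (Fa f)"
  using assms unfolding is_functor_def hom_def by blast+

lemma is_functor_cong:
  assumes "is_functor A B Fo Fa" "\<And>X. X \<in> Obj A \<Longrightarrow> Go X = Fo X" "\<And>f. f \<in> Arr A \<Longrightarrow> Ga f = Fa f"
  shows "is_functor A B Go Ga"
  using assms unfolding is_functor_def in_hom by (auto simp: cat_simps)

lemma is_functor_id: "is_category A \<Longrightarrow> is_functor A A id id"
  unfolding is_functor_def in_hom by (simp add: cat_simps)

lemma is_functor_comp:
  "is_functor A B Fo Fa \<Longrightarrow> is_functor B C Go Ga \<Longrightarrow> is_functor A C (Go \<circ> Fo) (Ga \<circ> Fa)"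
  unfolding is_functor_def in_hom by (auto simp: cat_simps)

lemma is_iso_Ident: "is_category B \<Longrightarrow> X \<in> Obj B \<Longrightarrow> is_iso B (Ident B X)"
  unfolding is_iso_def by (auto simp: in_hom cat_simps intro!: bexI[of _ "Ident B X"])

lemma nat_iso_Ident:
  assumes F: "is_functor A B Fo Fa"
    and "\<And>X. X \<in> Obj A \<Longrightarrow> Go X = Fo X" "\<And>f. f \<in> Arr A \<Longrightarrow> Ga f = Fa f"
  shows "nat_iso A B Fo Fa Go Ga (\<lambda>X. Ident B (Fo X))"
  using assms is_functor_cong[OF assms] functorD[OF F] is_iso_Ident[OF functorD(2)[OF F]]
  unfolding nat_iso_def by (auto simp: in_hom cat_simps)

lemma is_coproductD:
  assumes "is_coproduct C I X S c"
  shows "S \<in> Obj C" "\<And>i. i \<in> I \<Longrightarrow> c i \<in> hom C (X i) S"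
    "\<And>Y g. Y \<in> Obj C \<Longrightarrow> (\<And>i. i \<in> I \<Longrightarrow> g i \<in> hom C (X i) Y) \<Longrightarrow>
      \<exists>h. h \<in> hom C S Y \<and> (\<forall>i\<in>I. Comp C h (c i) = g i)"
  using assms unfolding is_coproduct_def by blast+

definition full_subcategory :: "('o, 'a) category \<Rightarrow> ('o \<Rightarrow> bool) \<Rightarrow> ('o, 'a) category" where
  "full_subcategory C P = \<lparr>Obj = {X \<in> Obj C. P X}, Arr = {f \<in> Arr C. P (Dom C f) \<and> P (Cod C f)},
     Dom = Dom C, Cod = Cod C, Ident = Ident C, Comp = Comp C\<rparr>"

lemma full_subcategory_simps [simp]:
  "Obj (full_subcategory C P) = {X \<in> Obj C. P X}"
  "Arr (full_subcategory C P) = {f \<in> Arr C. P (Dom C f) \<and> P (Cod C f)}"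
  "Dom (full_subcategory C P) = Dom C" "Cod (full_subcategory C P) = Cod C"
  "Ident (full_subcategory C P) = Ident C" "Comp (full_subcategory C P) = Comp C"
  by (simp_all add: full_subcategory_def)

lemma is_category_full_subcategory: "is_category C \<Longrightarrow> is_category (full_subcategory C P)"
  unfolding is_category_def by (auto simp: hom_def)

locale fully_faithful_surjective =
  fixes A :: "('o, 'a) category" and B :: "('p, 'b) category"
    and Ko :: "'o \<Rightarrow> 'p" and Ka :: "'a \<Rightarrow> 'b"
  assumes K_functor: "is_functor A B Ko Ka"
    and faithful: "\<And>a a'. a \<in> hom A X Y \<Longrightarrow> a' \<in> hom A X Y \<Longrightarrow> Ka a = Ka a' \<Longrightarrow> a = a'"
    and full: "\<And>b. X \<in> Obj A \<Longrightarrow> Y \<in> Obj A \<Longrightarrow> b \<in> hom B (Ko X) (Ko Y) \<Longrightarrow>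
      \<exists>a\<in>hom A X Y. Ka a = b"
    and surjective: "\<And>Y. Y \<in> Obj B \<Longrightarrow> \<exists>X\<in>Obj A. Ko X = Y"
begin

lemmas K = functorD[OF K_functor]

definition preimage :: "'o \<Rightarrow> 'o \<Rightarrow> 'b \<Rightarrow> 'a" where
  "preimage X Y b = (THE a. a \<in> hom A X Y \<and> Ka a = b)"

lemma preimage:
  assumes "X \<in> Obj A" "Y \<in> Obj A" "b \<in> hom B (Ko X) (Ko Y)"
  shows "preimage X Y b \<in> hom A X Y" "Ka (preimage X Y b) = b"
proof -
  have "\<exists>!a. a \<in> hom A X Y \<and> Ka a = b"
    using full[OF assms] faithful by blast
  from theI'[OF this] show "preimage X Y b \<in> hom A X Y" "Ka (preimage X Y b) = b"
    unfolding preimage_def by simp_all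
qed

definition inv_obj :: "'p \<Rightarrow> 'o" where
  "inv_obj Y = (SOME X. X \<in> Obj A \<and> Ko X = Y)"

definition inv_arr :: "'b \<Rightarrow> 'a" where
  "inv_arr b = preimage (inv_obj (Dom B b)) (inv_obj (Cod B b)) b"

lemma inv_obj: "Y \<in> Obj B \<Longrightarrow> inv_obj Y \<in> Obj A" "Y \<in> Obj B \<Longrightarrow> Ko (inv_obj Y) = Y"
  using someI_ex[of "\<lambda>X. X \<in> Obj A \<and> Ko X = Y"] surjective[of Y] unfolding inv_obj_def by blast+

lemma inv_arr:
  assumes "b \<in> Arr B"
  shows "inv_arr b \<in> hom A (inv_obj (Dom B b)) (inv_obj (Cod B b))" "Ka (inv_arr b) = b"
  using preimage[of "inv_obj (Dom B b)" "inv_obj (Cod B b)" b] assms K(2)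
  unfolding inv_arr_def by (simp_all add: inv_obj cat_simps in_hom)

lemma inv_functor: "is_functor B A inv_obj inv_arr"
  unfolding is_functor_def
proof (intro conjI ballI impI)
  show "is_category B" "is_category A" using K by simp_all
  show "inv_obj X \<in> Obj A" if "X \<in> Obj B" for X using inv_obj that by simp
  show "inv_arr f \<in> hom A (inv_obj (Dom B f)) (inv_obj (Cod B f))" if "f \<in> Arr B" for f
    using inv_arr that by simp
  show "inv_arr (Ident B X) = Ident A (inv_obj X)" if X: "X \<in> Obj B" for X
    by (rule faithful) (use inv_arr[of "Ident B X"] inv_obj X K in \<open>simp_all add: cat_simps in_hom\<close>)
  show "inv_arr (Comp B g f) = Comp A (inv_arr g) (inv_arr f)"
    if "f \<in> Arr B" "g \<in> Arr B" "Cod B f = Dom B g" for f g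
    by (rule faithful) (use inv_arr[of "Comp B g f"] inv_arr[of f] inv_arr[of g] that K
        in \<open>simp_all add: cat_simps in_hom\<close>)
qed

definition unit_arr :: "'o \<Rightarrow> 'a" where
  "unit_arr X = preimage X (inv_obj (Ko X)) (Ident B (Ko X))"

lemma unit_nat_iso: "nat_iso A A id id (inv_obj \<circ> Ko) (inv_arr \<circ> Ka) unit_arr"
  unfolding nat_iso_def
proof (intro conjI ballI)
  show "is_functor A A id id" using is_functor_id K(1) by blast
  show "is_functor A A (inv_obj \<circ> Ko) (inv_arr \<circ> Ka)" using is_functor_comp[OF K_functor inv_functor] .
  fix X assume X: "X \<in> Obj A"
  have KX: "Ko X \<in> Obj B" "inv_obj (Ko X) \<in> Obj A" "Ko (inv_obj (Ko X)) = Ko X"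
    using X K inv_obj by simp_all
  note u = preimage[OF X KX(2), of "Ident B (Ko X)"]
  note u' = preimage[OF KX(2) X, of "Ident B (Ko X)"]
  show "unit_arr X \<in> hom A (id X) ((inv_obj \<circ> Ko) X)"
    using u KX K by (simp add: unit_arr_def cat_simps in_hom)
  show "is_iso A (unit_arr X)"
    unfolding is_iso_def
  proof (intro conjI bexI)
    show "unit_arr X \<in> Arr A" using u KX K by (simp add: unit_arr_def cat_simps in_hom)
    show "preimage (inv_obj (Ko X)) X (Ident B (Ko X)) \<in> hom A (Cod A (unit_arr X)) (Dom A (unit_arr X))"
      using u u' KX K by (simp add: unit_arr_def cat_simps in_hom)
    show "Comp A (preimage (inv_obj (Ko X)) X (Ident B (Ko X))) (unit_arr X) = Ident A (Dom A (unit_arr X))"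
      by (rule faithful[of _ X X]) (use u u' KX K X in \<open>simp_all add: unit_arr_def cat_simps in_hom\<close>)
    show "Comp A (unit_arr X) (preimage (inv_obj (Ko X)) X (Ident B (Ko X))) = Ident A (Cod A (unit_arr X))"
      by (rule faithful[of _ "inv_obj (Ko X)" "inv_obj (Ko X)"])
        (use u u' KX K X in \<open>simp_all add: unit_arr_def cat_simps in_hom\<close>)
  qed
next
  fix f assume f: "f \<in> Arr A"
  have ob: "Dom A f \<in> Obj A" "Cod A f \<in> Obj A" "Ka f \<in> Arr B"
    using f K by (simp_all add: cat_simps)
  show "Comp A (unit_arr (Cod A f)) (id f) = Comp A ((inv_arr \<circ> Ka) f) (unit_arr (Dom A f))"
    by (rule faithful[of _ "Dom A f" "inv_obj (Ko (Cod A f))"])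
      (use f ob K inv_obj inv_arr[OF ob(3)] preimage[of "Dom A f" "inv_obj (Ko (Dom A f))"]
        preimage[of "Cod A f" "inv_obj (Ko (Cod A f))"] in \<open>simp_all add: unit_arr_def cat_simps in_hom\<close>)
qed

theorem is_equivalence_K: "is_equivalence A B Ko Ka"
proof -
  have "nat_iso B B id id (Ko \<circ> inv_obj) (Ka \<circ> inv_arr) (\<lambda>Y. Ident B (id Y))"
    by (rule nat_iso_Ident) (use is_functor_id K inv_obj inv_arr in auto)
  then show ?thesis
    unfolding is_equivalence_def using K_functor inv_functor unit_nat_iso by blast
qed

end

section \<open>The category of families\<close>

definition fam_map :: "('i, 'o, 'a) fam_arr \<Rightarrow> 'i \<Rightarrow> 'i" where
  "fam_map u = fst (snd (snd u))"

definition fam_cmp :: "('i, 'o, 'a) fam_arr \<Rightarrow> 'i \<Rightarrow> 'a" where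
  "fam_cmp u = snd (snd (snd u))"

lemma fam_map_simp [simp]: "fam_map (s, t, f, \<alpha>) = f"
  and fam_cmp_simp [simp]: "fam_cmp (s, t, f, \<alpha>) = \<alpha>"
  by (simp_all add: fam_map_def fam_cmp_def)

lemma Fam_Obj_iff: "X \<in> Obj (Fam C) \<longleftrightarrow> snd X \<in> fst X \<rightarrow>\<^sub>E Obj C"
  by (cases X) (simp add: Fam_def Fam_Obj_def)

lemma Fam_Dom [simp]: "Dom (Fam C) u = fst u"
  and Fam_Cod [simp]: "Cod (Fam C) u = fst (snd u)"
  and Fam_Ident: "Ident (Fam C) X = (X, X, \<lambda>i\<in>fst X. i, \<lambda>i\<in>fst X. Ident C (snd X i))"
  and Fam_Comp: "Comp (Fam C) v u = (fst u, fst (snd v), \<lambda>i\<in>fst (fst u). fam_map v (fam_map u i),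
     \<lambda>i\<in>fst (fst u). Comp C (fam_cmp v (fam_map u i)) (fam_cmp u i))"
  by (simp_all add: Fam_def case_prod_beta fam_map_def fam_cmp_def)

lemma Fam_arr_eq: "u = (Dom (Fam C) u, Cod (Fam C) u, fam_map u, fam_cmp u)"
  by (simp add: fam_map_def fam_cmp_def)

lemma Fam_Arr_iff: "u \<in> Arr (Fam C) \<longleftrightarrow>
   fst u \<in> Obj (Fam C) \<and> fst (snd u) \<in> Obj (Fam C) \<and>
   fam_map u \<in> fst (fst u) \<rightarrow>\<^sub>E fst (fst (snd u)) \<and> fam_cmp u \<in> extensional (fst (fst u)) \<and>
   (\<forall>i\<in>fst (fst u). fam_cmp u i \<in> hom C (snd (fst u) i) (snd (fst (snd u)) (fam_map u i)))"
  by (cases u) (auto simp: Fam_def Fam_Obj_def fam_map_def fam_cmp_def)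

lemma Fam_ArrD:
  assumes "u \<in> Arr (Fam C)"
  shows "Dom (Fam C) u \<in> Obj (Fam C)" "Cod (Fam C) u \<in> Obj (Fam C)"
    "fam_map u \<in> fst (Dom (Fam C) u) \<rightarrow>\<^sub>E fst (Cod (Fam C) u)"
    "fam_cmp u \<in> extensional (fst (Dom (Fam C) u))"
    "\<And>i. i \<in> fst (Dom (Fam C) u) \<Longrightarrow>
      fam_cmp u i \<in> hom C (snd (Dom (Fam C) u) i) (snd (Cod (Fam C) u) (fam_map u i))"
  using assms unfolding Fam_Arr_iff by auto

lemma Fam_arr_eqI:
  assumes "u \<in> Arr (Fam C)" "v \<in> Arr (Fam C)"
    and "Dom (Fam C) u = Dom (Fam C) v" "Cod (Fam C) u = Cod (Fam C) v"
    and "\<And>i. i \<in> fst (Dom (Fam C) u) \<Longrightarrow> fam_map u i = fam_map v i \<and> fam_cmp u i = fam_cmp v i"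
  shows "u = v"
proof -
  have "fam_map u = fam_map v" "fam_cmp u = fam_cmp v"
    using assms Fam_ArrD[OF assms(1)] Fam_ArrD[OF assms(2)]
    by (auto simp: PiE_iff intro!: extensionalityI[of _ "fst (fst u)"])
  then show ?thesis
    using assms(3,4) Fam_arr_eq[of u C] Fam_arr_eq[of v C] by simp
qed

lemma Fam_Ident_in_hom:
  "is_category C \<Longrightarrow> X \<in> Obj (Fam C) \<Longrightarrow> Ident (Fam C) X \<in> hom (Fam C) X X"
  by (auto simp: in_hom Fam_Arr_iff Fam_Ident Fam_Obj_iff PiE_iff cat_simps)

lemma Fam_Comp_in_hom:
  assumes "is_category C" "u \<in> Arr (Fam C)" "v \<in> Arr (Fam C)" "Cod (Fam C) u = Dom (Fam C) v"
  shows "Comp (Fam C) v u \<in> hom (Fam C) (Dom (Fam C) u) (Cod (Fam C) v)"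
  using assms Fam_ArrD[OF assms(2)] Fam_ArrD[OF assms(3)]
  by (auto simp: Fam_Arr_iff Fam_Comp in_hom PiE_iff cat_simps)

lemma is_category_Fam:
  fixes C :: "('o, 'a) category"
  assumes C: "is_category C"
  shows "is_category (Fam C :: (('i, 'o) fam_obj, ('i, 'o, 'a) fam_arr) category)"
  unfolding is_category_def
proof (intro conjI ballI impI)
  fix X :: "('i, 'o) fam_obj" assume "X \<in> Obj (Fam C)"
  then show "Ident (Fam C) X \<in> hom (Fam C) X X" using Fam_Ident_in_hom C by blast
next
  fix u v w :: "('i, 'o, 'a) fam_arr" assume uvw: "u \<in> Arr (Fam C)" "v \<in> Arr (Fam C)" "w \<in> Arr (Fam C)"
  note u = Fam_ArrD[OF uvw(1)] and v = Fam_ArrD[OF uvw(2)] and w = Fam_ArrD[OF uvw(3)]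
  show "Dom (Fam C) u \<in> Obj (Fam C)" "Cod (Fam C) u \<in> Obj (Fam C)" using u by simp_all
  show "Comp (Fam C) v u \<in> hom (Fam C) (Dom (Fam C) u) (Cod (Fam C) v)"
    if "Cod (Fam C) u = Dom (Fam C) v"
    using Fam_Comp_in_hom[OF C uvw(1,2) that] .
  have id: "Ident (Fam C) X \<in> hom (Fam C) X X" if "X \<in> Obj (Fam C)" for X
    using Fam_Ident_in_hom[OF C that] .
  show "Comp (Fam C) (Ident (Fam C) (Cod (Fam C) u)) u = u"
  proof (rule Fam_arr_eqI[OF _ uvw(1)])
    show "Comp (Fam C) (Ident (Fam C) (Cod (Fam C) u)) u \<in> Arr (Fam C)"
      using Fam_Comp_in_hom[OF C uvw(1)] id[OF u(2)] by (simp add: in_hom)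
  qed (use u C in \<open>auto simp: in_hom Fam_Comp Fam_Ident PiE_iff cat_simps\<close>)
  show "Comp (Fam C) u (Ident (Fam C) (Dom (Fam C) u)) = u"
  proof (rule Fam_arr_eqI[OF _ uvw(1)])
    show "Comp (Fam C) u (Ident (Fam C) (Dom (Fam C) u)) \<in> Arr (Fam C)"
      using Fam_Comp_in_hom[OF C _ uvw(1)] id[OF u(1)] by (simp add: in_hom)
  qed (use u C in \<open>auto simp: in_hom Fam_Comp Fam_Ident PiE_iff cat_simps\<close>)
  show "Comp (Fam C) w (Comp (Fam C) v u) = Comp (Fam C) (Comp (Fam C) w v) u"
    if uv: "Cod (Fam C) u = Dom (Fam C) v" and vw: "Cod (Fam C) v = Dom (Fam C) w"
  proof (rule Fam_arr_eqI)
    have vu: "Comp (Fam C) v u \<in> hom (Fam C) (Dom (Fam C) u) (Cod (Fam C) v)"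
      and wv: "Comp (Fam C) w v \<in> hom (Fam C) (Dom (Fam C) v) (Cod (Fam C) w)"
      using Fam_Comp_in_hom[OF C] uvw uv vw by blast+
    show "Comp (Fam C) w (Comp (Fam C) v u) \<in> Arr (Fam C)"
      using Fam_Comp_in_hom[OF C _ uvw(3)] vu vw by (simp add: in_hom)
    show "Comp (Fam C) (Comp (Fam C) w v) u \<in> Arr (Fam C)"
      using Fam_Comp_in_hom[OF C uvw(1)] wv uv by (simp add: in_hom)
  qed (use u v w uv vw C in \<open>auto simp: in_hom Fam_Comp PiE_iff cat_assoc\<close>)
qed

definition fam_single :: "'i \<Rightarrow> 'o \<Rightarrow> ('i, 'o) fam_obj" where
  "fam_single i0 A = ({i0}, \<lambda>_\<in>{i0}. A)"

definition fam_point :: "'i \<Rightarrow> 'o \<Rightarrow> ('i, 'o) fam_obj \<Rightarrow> 'i \<Rightarrow> 'a \<Rightarrow> ('i, 'o, 'a) fam_arr" where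
  "fam_point i0 A t j a = (fam_single i0 A, t, \<lambda>_\<in>{i0}. j, \<lambda>_\<in>{i0}. a)"

definition fam_coproj :: "('o, 'a) category \<Rightarrow> 'i \<Rightarrow> ('i, 'o) fam_obj \<Rightarrow> 'i \<Rightarrow> ('i, 'o, 'a) fam_arr" where
  "fam_coproj C i0 s i = fam_point i0 (snd s i) s i (Ident C (snd s i))"

lemma fam_point_simps [simp]:
  "Dom (Fam C) (fam_point i0 A t j a) = fam_single i0 A"
  "Cod (Fam C) (fam_point i0 A t j a) = t"
  "fam_map (fam_point i0 A t j a) i0 = j"
  "fam_cmp (fam_point i0 A t j a) i0 = a"
  by (simp_all add: fam_point_def)

lemma fam_point_eq_iff [simp]:
  "fam_point i0 A t j a = fam_point i0 A' t' j' a' \<longleftrightarrow> A = A' \<and> t = t' \<and> j = j' \<and> a = a'"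
  by (auto simp: fam_point_def fam_single_def dest: fun_cong[where x = i0])

lemma fam_point_in_hom:
  assumes "is_category C" "t \<in> Obj (Fam C)" "j \<in> fst t" "a \<in> hom C A (snd t j)"
  shows "fam_point i0 A t j a \<in> hom (Fam C) (fam_single i0 A) t"
  using assms by (auto simp: in_hom Fam_Arr_iff fam_point_def fam_single_def Fam_Obj_iff cat_simps)

lemma Fam_arr_from_single:
  assumes "is_category C" "u \<in> Arr (Fam C)" "Dom (Fam C) u = fam_single i0 A"
  shows "u = fam_point i0 A (Cod (Fam C) u) (fam_map u i0) (fam_cmp u i0)"
proof (rule Fam_arr_eqI[OF assms(2)])
  show "fam_point i0 A (Cod (Fam C) u) (fam_map u i0) (fam_cmp u i0) \<in> Arr (Fam C)"
    using fam_point_in_hom[OF assms(1), of "Cod (Fam C) u" "fam_map u i0" "fam_cmp u i0" A i0]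
      Fam_ArrD[OF assms(2)] assms(3)
    by (simp add: in_hom fam_single_def PiE_iff)
qed (use assms in \<open>auto simp: fam_single_def fam_point_def\<close>)

lemma fam_coproj_in_hom:
  "is_category C \<Longrightarrow> s \<in> Obj (Fam C) \<Longrightarrow> i \<in> fst s \<Longrightarrow>
    fam_coproj C i0 s i \<in> hom (Fam C) (fam_single i0 (snd s i)) s"
  unfolding fam_coproj_def by (rule fam_point_in_hom) (auto simp: Fam_Obj_iff PiE_iff in_hom cat_simps)

lemma Fam_Comp_point:
  assumes "u \<in> hom (Fam C) s t" "j \<in> fst s"
  shows "Comp (Fam C) u (fam_point i0 A s j a) = fam_point i0 A t (fam_map u j) (Comp C (fam_cmp u j) a)"
  using assms by (auto simp: in_hom Fam_Comp fam_point_def fam_single_def intro!: restrict_ext)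

lemma Fam_Comp_coproj:
  assumes "is_category C" "u \<in> hom (Fam C) s t" "i \<in> fst s"
  shows "Comp (Fam C) u (fam_coproj C i0 s i) = fam_point i0 (snd s i) t (fam_map u i) (fam_cmp u i)"
  using assms Fam_ArrD(5)[of u C i]
  by (simp add: fam_coproj_def Fam_Comp_point in_hom cat_simps)

lemma Fam_coproj_jointly_epi:
  assumes "is_category C" "u \<in> hom (Fam C) s t" "v \<in> hom (Fam C) s t"
    and "\<And>i. i \<in> fst s \<Longrightarrow> Comp (Fam C) u (fam_coproj C i0 s i) = Comp (Fam C) v (fam_coproj C i0 s i)"
  shows "u = v"
  using assms Fam_Comp_coproj[OF assms(1,2), of _ i0] Fam_Comp_coproj[OF assms(1,3), of _ i0]
  by (intro Fam_arr_eqI) (auto simp: in_hom)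

definition fam_copair ::
  "'i \<Rightarrow> 'i set \<Rightarrow> ('i \<Rightarrow> 'o) \<Rightarrow> ('i, 'o) fam_obj \<Rightarrow> ('i \<Rightarrow> ('i, 'o, 'a) fam_arr) \<Rightarrow> ('i, 'o, 'a) fam_arr"
  where "fam_copair i0 I A t u = ((I, A), t, \<lambda>i\<in>I. fam_map (u i) i0, \<lambda>i\<in>I. fam_cmp (u i) i0)"

lemma fam_copair_in_hom:
  assumes "is_category C" "(I, A) \<in> Obj (Fam C)" "t \<in> Obj (Fam C)"
    and "\<And>i. i \<in> I \<Longrightarrow> u i \<in> hom (Fam C) (fam_single i0 (A i)) t"
  shows "fam_copair i0 I A t u \<in> hom (Fam C) (I, A) t"
  using assms Fam_ArrD[of "u _" C]
  by (fastforce simp: in_hom Fam_Arr_iff fam_copair_def fam_single_def PiE_iff)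

lemma Fam_Comp_copair_coproj:
  assumes "is_category C" "(I, A) \<in> Obj (Fam C)" "t \<in> Obj (Fam C)"
    and "\<And>i. i \<in> I \<Longrightarrow> u i \<in> hom (Fam C) (fam_single i0 (A i)) t" and "i \<in> I"
  shows "Comp (Fam C) (fam_copair i0 I A t u) (fam_coproj C i0 (I, A) i) = u i"
proof -
  have cp: "fam_copair i0 I A t u \<in> hom (Fam C) (I, A) t"
    using assms(1-4) by (rule fam_copair_in_hom)
  have "Comp (Fam C) (fam_copair i0 I A t u) (fam_coproj C i0 (I, A) i) =
      fam_point i0 (A i) t (fam_map (u i) i0) (fam_cmp (u i) i0)"
    using Fam_Comp_coproj[OF assms(1) cp, of i i0] assms(5) by (simp add: fam_copair_def)
  also have "\<dots> = u i"
    using Fam_arr_from_single[OF assms(1), of "u i" i0 "A i"] assms(4)[OF assms(5)] by (simp add: in_hom)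
  finally show ?thesis .
qed

lemma Fam_copair_section:
  assumes C: "is_category C" and IA: "(I, A) \<in> Obj (Fam C)" and v: "v \<in> hom (Fam C) t (I, A)"
    and u: "\<And>i. i \<in> I \<Longrightarrow> u i \<in> hom (Fam C) (fam_single i0 (A i)) t"
    and vu: "\<And>i. i \<in> I \<Longrightarrow> Comp (Fam C) v (u i) = fam_coproj C i0 (I, A) i"
  shows "Comp (Fam C) v (fam_copair i0 I A t u) = Ident (Fam C) (I, A)"
proof (rule Fam_coproj_jointly_epi[OF C])
  have t: "t \<in> Obj (Fam C)" using v Fam_ArrD(1)[of v C] by (simp add: in_hom)
  note w = fam_copair_in_hom[OF C IA t u]
  have "Comp (Fam C) v (fam_copair i0 I A t u) \<in> hom (Fam C) (Dom (Fam C) (fam_copair i0 I A t u)) (Cod (Fam C) v)"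
    by (rule Fam_Comp_in_hom[OF C]) (use w v in \<open>simp_all add: in_hom\<close>)
  then show "Comp (Fam C) v (fam_copair i0 I A t u) \<in> hom (Fam C) (I, A) (I, A)"
    using w v by (simp add: in_hom)
  show "Ident (Fam C) (I, A) \<in> hom (Fam C) (I, A) (I, A)"
    using Fam_Ident_in_hom[OF C IA] .
  fix i assume i: "i \<in> fst (I, A)"
  note j = fam_coproj_in_hom[OF C IA i, of i0]
  have "Comp (Fam C) (Comp (Fam C) v (fam_copair i0 I A t u)) (fam_coproj C i0 (I, A) i) =
      Comp (Fam C) v (Comp (Fam C) (fam_copair i0 I A t u) (fam_coproj C i0 (I, A) i))"
    using cat_assoc[OF is_category_Fam[OF C], of "fam_coproj C i0 (I, A) i" "fam_copair i0 I A t u" v]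
      w v j by (simp add: in_hom)
  also have "\<dots> = Comp (Fam C) (Ident (Fam C) (I, A)) (fam_coproj C i0 (I, A) i)"
    using Fam_Comp_copair_coproj[OF C IA t u] vu i j
      cat_id_left[OF is_category_Fam[OF C], of "fam_coproj C i0 (I, A) i" "(I, A)"]
    by (simp add: in_hom)
  finally show "Comp (Fam C) (Comp (Fam C) v (fam_copair i0 I A t u)) (fam_coproj C i0 (I, A) i) =
      Comp (Fam C) (Ident (Fam C) (I, A)) (fam_coproj C i0 (I, A) i)" .
qed

lemma Fam_coproj_Comp:
  assumes "is_category C" "u \<in> hom (Fam C) s (fam_single i0 (snd t j))"
  shows "Comp (Fam C) (fam_coproj C i0 t j) u = (s, t, \<lambda>x\<in>fst s. j, fam_cmp u)"
proof -
  note u = Fam_ArrD[of u C]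
  have "fam_map u x = i0" "Comp C (Ident C (snd t j)) (fam_cmp u x) = fam_cmp u x" if "x \<in> fst s" for x
    using u(3) u(5)[of x] assms that by (auto simp: in_hom fam_single_def cat_simps)
  then show ?thesis
    using u(4) assms(2) by (auto simp: in_hom Fam_Comp fam_coproj_def fam_point_def fam_single_def
        intro!: restrict_ext extensionalityI[of _ "fst s"])
qed

lemma Fam_coproj_Comp_cancel:
  assumes "is_category C" "u \<in> hom (Fam C) s (fam_single i0 (snd t j))"
    and "u' \<in> hom (Fam C) s (fam_single i0 (snd t j'))" and "x \<in> fst s"
    and "Comp (Fam C) (fam_coproj C i0 t j) u = Comp (Fam C) (fam_coproj C i0 t j') u'"
  shows "j = j'" "u = u'"
proof -
  have *: "(\<lambda>x\<in>fst s. j) = (\<lambda>x\<in>fst s. j')" "fam_cmp u = fam_cmp u'"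
    using assms(5) unfolding Fam_coproj_Comp[OF assms(1,2)] Fam_coproj_Comp[OF assms(1,3)] by simp_all
  then show "j = j'" using assms(4) by (metis restrict_apply')
  show "u = u'"
  proof (rule Fam_arr_eqI)
    show "u \<in> Arr (Fam C)" "u' \<in> Arr (Fam C)" using assms(2,3) by (simp_all add: in_hom)
    show "Dom (Fam C) u = Dom (Fam C) u'" "Cod (Fam C) u = Cod (Fam C) u'"
      using assms(2,3) \<open>j = j'\<close> by (simp_all add: in_hom)
    show "fam_map u i = fam_map u' i \<and> fam_cmp u i = fam_cmp u' i" if "i \<in> fst (Dom (Fam C) u)" for i
      using Fam_ArrD(3)[of u C] Fam_ArrD(3)[of u' C] assms(2,3) that *
      by (auto simp: in_hom fam_single_def)
  qed
qed

section \<open>Discrete fibrations over Fam C\<close>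

locale discrete_fibration_over_Fam =
  fixes C :: "('co, 'ca) category" and E :: "('eo, 'ea) category"
    and Fo :: "'eo \<Rightarrow> ('i, 'co) fam_obj" and Fa :: "'ea \<Rightarrow> ('i, 'co, 'ca) fam_arr"
    and i0 :: 'i
  assumes C: "is_category C" and E: "is_category E"
    and F: "is_discrete_fibration E (Fam C) Fo Fa"
begin

lemma F_functor: "is_functor E (Fam C) Fo Fa"
  using F unfolding is_discrete_fibration_def by blast

lemmas Fd = functorD[OF F_functor]

lemma Fa_in_hom: "e \<in> hom E X Y \<Longrightarrow> Fa e \<in> hom (Fam C) (Fo X) (Fo Y)"
  using Fd by (simp add: in_hom)

lemma Fa_Comp:
  "e \<in> hom E X Y \<Longrightarrow> e' \<in> hom E Y Z \<Longrightarrow> Fa (Comp E e' e) = Comp (Fam C) (Fa e') (Fa e)"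
  using Fd by (simp add: in_hom)

lemma fam_map_Fa:
  "e \<in> hom E X Y \<Longrightarrow> i \<in> fst (Fo X) \<Longrightarrow> fam_map (Fa e) i \<in> fst (Fo Y)"
  using Fam_ArrD(3)[of "Fa e" C] Fa_in_hom[of e X Y] by (auto simp: in_hom)

definition lift :: "'eo \<Rightarrow> ('i, 'co, 'ca) fam_arr \<Rightarrow> 'ea" where
  "lift X u = (THE e. e \<in> Arr E \<and> Cod E e = X \<and> Fa e = u)"

lemma lift:
  assumes "X \<in> Obj E" "u \<in> hom (Fam C) s (Fo X)"
  shows "lift X u \<in> hom E (Dom E (lift X u)) X" "Fa (lift X u) = u" "Fo (Dom E (lift X u)) = s"
proof -
  have "\<exists>!e. e \<in> Arr E \<and> Cod E e = X \<and> Fa e = u"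
    using F assms unfolding is_discrete_fibration_def by (simp add: in_hom)
  from theI'[OF this] show "lift X u \<in> hom E (Dom E (lift X u)) X" "Fa (lift X u) = u"
    unfolding lift_def by (simp_all add: in_hom)
  then show "Fo (Dom E (lift X u)) = s"
    using Fd(5)[of "lift X u", symmetric] assms(2) by (simp add: in_hom)
qed

lemma eq_if_Fa_eq:
  assumes "e \<in> hom E X Y" "e' \<in> hom E X' Y" "Fa e = Fa e'"
  shows "e = e'"
proof -
  have "Y \<in> Obj E" "Fa e' \<in> hom (Fam C) (Fo X') (Fo Y)"
    using assms(2) cat_cod_obj[OF E] Fa_in_hom by (auto simp: in_hom)
  then have "\<exists>!e. e \<in> Arr E \<and> Cod E e = Y \<and> Fa e = Fa e'"
    using F unfolding is_discrete_fibration_def by (simp add: in_hom)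
  then show ?thesis using assms by (auto simp: in_hom)
qed

lemma lift_section:
  assumes h: "h \<in> hom E S X" and k: "k \<in> hom (Fam C) (Fo X) (Fo S)"
    and hk: "Comp (Fam C) (Fa h) k = Ident (Fam C) (Fo X)"
  shows "lift S k \<in> hom E X S" "Comp E h (lift S k) = Ident E X"
proof -
  have S: "S \<in> Obj E" and X: "X \<in> Obj E" using h E by (auto simp: in_hom cat_simps)
  note t = lift[OF S k]
  have "Comp E h (lift S k) \<in> hom E (Dom E (lift S k)) X" "Ident E X \<in> hom E X X"
    using t(1) h X E by (auto simp: in_hom cat_simps)
  moreover have "Fa (Comp E h (lift S k)) = Fa (Ident E X)"
    using Fa_Comp[OF t(1) h] t(2) hk Fd(7)[OF X] by simp
  ultimately show "Comp E h (lift S k) = Ident E X"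
    using eq_if_Fa_eq by blast
  then show "lift S k \<in> hom E X S"
    using t(1) h X E by (metis cat_comp_dom cat_id_dom in_hom)
qed

definition coproj :: "'eo \<Rightarrow> 'i \<Rightarrow> 'ea" where
  "coproj X i = lift X (fam_coproj C i0 (Fo X) i)"

definition component :: "'eo \<Rightarrow> 'i \<Rightarrow> 'eo" where
  "component X i = Dom E (coproj X i)"

lemma coproj:
  assumes "X \<in> Obj E" "i \<in> fst (Fo X)"
  shows "coproj X i \<in> hom E (component X i) X" "Fa (coproj X i) = fam_coproj C i0 (Fo X) i"
    "Fo (component X i) = fam_single i0 (snd (Fo X) i)" "component X i \<in> Obj E"
  using lift[OF assms(1) fam_coproj_in_hom[OF C Fd(3)[OF assms(1)] assms(2)]] E
  unfolding coproj_def component_def by (auto simp: in_hom cat_simps)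

lemma coproj_Comp_cancel:
  assumes "Y \<in> Obj E" "j \<in> fst (Fo Y)" "j' \<in> fst (Fo Y)"
    and "a \<in> hom E Z (component Y j)" "a' \<in> hom E Z (component Y j')" "fst (Fo Z) \<noteq> {}"
    and "Comp E (coproj Y j) a = Comp E (coproj Y j') a'"
  shows "j = j'" "a = a'"
proof -
  have eq: "Comp (Fam C) (fam_coproj C i0 (Fo Y) j) (Fa a) = Comp (Fam C) (fam_coproj C i0 (Fo Y) j') (Fa a')"
    using assms(7) Fa_Comp[OF assms(4) coproj(1)[OF assms(1,2)]] Fa_Comp[OF assms(5) coproj(1)[OF assms(1,3)]]
      coproj(2) assms(1-3) by simp
  have hom: "Fa a \<in> hom (Fam C) (Fo Z) (fam_single i0 (snd (Fo Y) j))"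
    "Fa a' \<in> hom (Fam C) (Fo Z) (fam_single i0 (snd (Fo Y) j'))"
    using Fa_in_hom[OF assms(4)] Fa_in_hom[OF assms(5)] coproj(3) assms(1-3) by simp_all
  obtain x where "x \<in> fst (Fo Z)" using assms(6) by blast
  from Fam_coproj_Comp_cancel[OF C hom this eq] show "j = j'" "a = a'"
    using eq_if_Fa_eq assms(4,5) by blast+
qed

lemma coproj_jointly_epi:
  assumes "e \<in> hom E X Y" "e' \<in> hom E X Y"
    and "\<And>i. i \<in> fst (Fo X) \<Longrightarrow> Comp E e (coproj X i) = Comp E e' (coproj X i)"
  shows "e = e'"
proof -
  have X: "X \<in> Obj E" using assms(1) E by (auto simp: in_hom cat_simps)
  have "Fa e = Fa e'"
  proof (rule Fam_coproj_jointly_epi[OF C Fa_in_hom[OF assms(1)] Fa_in_hom[OF assms(2)]])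
    fix i assume i: "i \<in> fst (Fo X)"
    show "Comp (Fam C) (Fa e) (fam_coproj C i0 (Fo X) i) = Comp (Fam C) (Fa e') (fam_coproj C i0 (Fo X) i)"
      using assms(3)[OF i] Fa_Comp[OF coproj(1)[OF X i]] assms(1,2) coproj(2)[OF X i] by metis
  qed
  then show ?thesis using eq_if_Fa_eq assms(1,2) by blast
qed

definition component_arr :: "'ea \<Rightarrow> 'i \<Rightarrow> 'ea" where
  "component_arr e i = lift (component (Cod E e) (fam_map (Fa e) i))
     (fam_point i0 (snd (Fo (Dom E e)) i) (fam_single i0 (snd (Fo (Cod E e)) (fam_map (Fa e) i))) i0
       (fam_cmp (Fa e) i))"

lemma component_arr:
  assumes e: "e \<in> hom E X Y" and i: "i \<in> fst (Fo X)"
  shows "component_arr e i \<in> hom E (component X i) (component Y (fam_map (Fa e) i))"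
    and "fam_cmp (Fa (component_arr e i)) i0 = fam_cmp (Fa e) i"
    and "Comp E (coproj Y (fam_map (Fa e) i)) (component_arr e i) = Comp E e (coproj X i)"
proof -
  define j where "j = fam_map (Fa e) i"
  define p where "p = fam_point i0 (snd (Fo X) i) (fam_single i0 (snd (Fo Y) j)) i0 (fam_cmp (Fa e) i)"
  have XY: "X \<in> Obj E" "Y \<in> Obj E" using e E by (auto simp: in_hom cat_simps)
  note Fe = Fa_in_hom[OF e]
  have j: "j \<in> fst (Fo Y)" and \<alpha>: "fam_cmp (Fa e) i \<in> hom C (snd (Fo X) i) (snd (Fo Y) j)"
    using fam_map_Fa[OF e i] Fam_ArrD(5)[of "Fa e" C] Fe i unfolding j_def by (auto simp: in_hom)
  have p: "p \<in> hom (Fam C) (fam_single i0 (snd (Fo X) i)) (fam_single i0 (snd (Fo Y) j))"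
    unfolding p_def
    by (rule fam_point_in_hom)
      (use C \<alpha> Fd(3)[OF XY(2)] j in \<open>auto simp: fam_single_def Fam_Obj_iff PiE_iff\<close>)
  then have "p \<in> hom (Fam C) (fam_single i0 (snd (Fo X) i)) (Fo (component Y j))"
    using coproj(3)[OF XY(2) j] by simp
  note l = lift[OF coproj(4)[OF XY(2) j] this]
  have comp_l: "Comp E (coproj Y j) (lift (component Y j) p) \<in> hom E (Dom E (lift (component Y j) p)) Y"
    using l(1) coproj(1)[OF XY(2) j] E by (auto simp: in_hom cat_simps)
  have comp_e: "Comp E e (coproj X i) \<in> hom E (component X i) Y"
    using e coproj(1)[OF XY(1) i] E by (auto simp: in_hom cat_simps)
  have "Fa (Comp E (coproj Y j) (lift (component Y j) p)) =
      fam_point i0 (snd (Fo X) i) (Fo Y) j (fam_cmp (Fa e) i)"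
    using Fa_Comp[OF l(1) coproj(1)[OF XY(2) j]] Fam_coproj_Comp[OF C p] l(2) coproj(2)[OF XY(2) j]
    by (simp add: p_def fam_point_def fam_single_def)
  also have "\<dots> = Fa (Comp E e (coproj X i))"
    using Fa_Comp[OF coproj(1)[OF XY(1) i] e] Fam_Comp_coproj[OF C Fe i] coproj(2)[OF XY(1) i]
    by (simp add: j_def)
  finally have eq: "Comp E (coproj Y j) (lift (component Y j) p) = Comp E e (coproj X i)"
    using eq_if_Fa_eq[OF comp_l comp_e] by blast
  then have "Dom E (lift (component Y j) p) = component X i"
    using comp_l comp_e by (auto simp: in_hom)
  then show "component_arr e i \<in> hom E (component X i) (component Y (fam_map (Fa e) i))"
    "fam_cmp (Fa (component_arr e i)) i0 = fam_cmp (Fa e) i"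
    "Comp E (coproj Y (fam_map (Fa e) i)) (component_arr e i) = Comp E e (coproj X i)"
    using l eq e unfolding component_arr_def p_def j_def by (auto simp: in_hom)
qed

abbreviation Conn :: "('eo, 'ea) category" where
  "Conn \<equiv> full_subcategory E (\<lambda>X. fst (Fo X) = {i0})"

definition Go :: "'eo \<Rightarrow> 'co" where
  "Go X = snd (Fo X) i0"

definition Ga :: "'ea \<Rightarrow> 'ca" where
  "Ga e = fam_cmp (Fa e) i0"

lemma Fo_Conn:
  assumes "X \<in> Obj Conn"
  shows "Fo X = fam_single i0 (Go X)"
proof -
  have "fst (Fo X) = {i0}" "snd (Fo X) \<in> extensional {i0}"
    using assms Fd(3)[of X] by (simp_all add: Fam_Obj_iff PiE_iff)
  then show ?thesis
    unfolding fam_single_def Go_def prod_eq_iff by (auto simp: fun_eq_iff extensional_def)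
qed

lemma Fa_Conn:
  assumes e: "e \<in> Arr Conn"
  shows "fam_map (Fa e) i0 = i0" "Fa e = fam_point i0 (Go (Dom E e)) (Fo (Cod E e)) i0 (Ga e)"
proof -
  have "Fa e \<in> hom (Fam C) (fam_single i0 (Go (Dom E e))) (Fo (Cod E e))"
    using e Fa_in_hom[of e] Fo_Conn[of "Dom E e"] cat_dom_obj[OF E, of e] by (simp add: in_hom)
  note Fe = Fam_ArrD(3)[of "Fa e" C] and single = Fam_arr_from_single[OF C, of "Fa e" i0]
  show map: "fam_map (Fa e) i0 = i0"
    using Fe \<open>Fa e \<in> _\<close> e by (auto simp: in_hom fam_single_def)
  show "Fa e = fam_point i0 (Go (Dom E e)) (Fo (Cod E e)) i0 (Ga e)"
    using single \<open>Fa e \<in> _\<close> map by (simp add: in_hom Ga_def)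
qed

lemma G_functor: "is_functor Conn C Go Ga"
  unfolding is_functor_def
proof (intro conjI ballI impI)
  show "is_category Conn" using is_category_full_subcategory[OF E] .
  show "is_category C" by (rule C)
next
  fix X assume X: "X \<in> Obj Conn"
  show "Go X \<in> Obj C"
    using Fd(3)[of X] X Fo_Conn[OF X] by (simp add: Fam_Obj_iff fam_single_def)
  show "Ga (Ident Conn X) = Ident C (Go X)"
    using Fd(7)[of X] X by (simp add: Ga_def Go_def Fam_Ident)
next
  fix f assume f: "f \<in> Arr Conn"
  show "Ga f \<in> hom C (Go (Dom Conn f)) (Go (Cod Conn f))"
    using Fam_ArrD(5)[of "Fa f" C i0] Fd(4,5,6)[of f] f Fa_Conn(1)[OF f] by (simp add: Ga_def Go_def)
next
  fix f g assume f: "f \<in> Arr Conn" and g: "g \<in> Arr Conn" and fg: "Cod Conn f = Dom Conn g"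
  show "Ga (Comp Conn g f) = Comp C (Ga g) (Ga f)"
    using Fd(8)[of f g] Fd(5)[of f] f g fg Fa_Conn(1)[OF f] by (simp add: Ga_def Fam_Comp)
qed

lemma G_discrete_fibration: "is_discrete_fibration Conn C Go Ga"
  unfolding is_discrete_fibration_def
proof (intro conjI ballI impI G_functor)
  fix X u assume X: "X \<in> Obj Conn" and u: "u \<in> Arr C" and uX: "Cod C u = Go X"
  define p where "p = fam_point i0 (Dom C u) (Fo X) i0 u"
  have "p \<in> hom (Fam C) (fam_single i0 (Dom C u)) (Fo X)"
    unfolding p_def using fam_point_in_hom[OF C, of "Fo X" i0 u "Dom C u" i0] Fd(3)[of X] X u uX Fo_Conn[OF X]
    by (simp add: in_hom fam_single_def)
  note l = lift[OF _ this]
  show "\<exists>!e. e \<in> Arr Conn \<and> Cod Conn e = X \<and> Ga e = u"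
  proof (rule ex1I)
    show "lift X p \<in> Arr Conn \<and> Cod Conn (lift X p) = X \<and> Ga (lift X p) = u"
      using l X by (simp add: in_hom Ga_def p_def fam_single_def)
  next
    fix e assume e: "e \<in> Arr Conn \<and> Cod Conn e = X \<and> Ga e = u"
    then have "Go (Dom E e) = Dom C u"
      using G_functor uX unfolding is_functor_def by (auto simp: in_hom)
    then have "Fa e = p"
      using Fa_Conn(2)[of e] e by (auto simp: p_def)
    then show "e = lift X p"
      using eq_if_Fa_eq[of e _ X] l e X by (auto simp: in_hom)
  qed
qed

lemma component_in_Conn:
  assumes "X \<in> Obj E" "i \<in> fst (Fo X)"
  shows "component X i \<in> Obj Conn" "Go (component X i) = snd (Fo X) i"
  using coproj(3,4)[OF assms] by (simp_all add: fam_single_def Go_def)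

lemma component_arr_in_Conn:
  assumes "e \<in> hom E X Y" "i \<in> fst (Fo X)"
  shows "component_arr e i \<in> hom Conn (component X i) (component Y (fam_map (Fa e) i))"
    "Ga (component_arr e i) = fam_cmp (Fa e) i"
proof -
  show "component_arr e i \<in> hom Conn (component X i) (component Y (fam_map (Fa e) i))"
    using component_arr(1)[OF assms] component_in_Conn fam_map_Fa[OF assms] assms E
    by (auto simp: in_hom cat_simps)
  show "Ga (component_arr e i) = fam_cmp (Fa e) i"
    using component_arr(2)[OF assms] by (simp add: Ga_def)
qed

lemma fam_map_Ident: "X \<in> Obj E \<Longrightarrow> i \<in> fst (Fo X) \<Longrightarrow> fam_map (Fa (Ident E X)) i = i"
  using Fd(7) by (simp add: Fam_Ident)

lemma fam_map_Comp:
  "f \<in> hom E X Y \<Longrightarrow> g \<in> hom E Y Z \<Longrightarrow> i \<in> fst (Fo X) \<Longrightarrow>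
    fam_map (Fa (Comp E g f)) i = fam_map (Fa g) (fam_map (Fa f) i)"
  using Fa_Comp Fa_in_hom by (simp add: Fam_Comp in_hom)

lemma component_arr_Ident:
  assumes X: "X \<in> Obj E" and i: "i \<in> fst (Fo X)"
  shows "component_arr (Ident E X) i = Ident E (component X i)"
proof -
  have idX: "Ident E X \<in> hom E X X" using X E by (simp add: in_hom cat_simps)
  note c = coproj[OF X i] and a = component_arr[OF idX i, unfolded fam_map_Ident[OF X i]]
  have "Comp E (coproj X i) (component_arr (Ident E X) i) = Comp E (coproj X i) (Ident E (component X i))"
    using a(3) c(1) E by (simp add: in_hom cat_simps)
  then show ?thesis
    using coproj_Comp_cancel(2)[OF X i i a(1)] c E by (simp add: in_hom cat_simps fam_single_def)
qed

lemma component_arr_Comp: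
  assumes f: "f \<in> hom E X Y" and g: "g \<in> hom E Y Z" and i: "i \<in> fst (Fo X)"
  shows "component_arr (Comp E g f) i = Comp E (component_arr g (fam_map (Fa f) i)) (component_arr f i)"
proof -
  define j where "j = fam_map (Fa f) i"
  have XYZ: "X \<in> Obj E" "Y \<in> Obj E" "Z \<in> Obj E" using f g E by (auto simp: in_hom cat_simps)
  have j: "j \<in> fst (Fo Y)" and k: "fam_map (Fa g) j \<in> fst (Fo Z)"
    using fam_map_Fa[OF f i] fam_map_Fa[OF g] by (simp_all add: j_def)
  have gf: "Comp E g f \<in> hom E X Z" using f g E by (auto simp: in_hom cat_simps)
  note af = component_arr[OF f i, folded j_def] and ag = component_arr[OF g j]
  note agf = component_arr[OF gf i, unfolded fam_map_Comp[OF f g i], folded j_def]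
  have comp: "Comp E (component_arr g j) (component_arr f i) \<in>
      hom E (component X i) (component Z (fam_map (Fa g) j))"
    using af(1) ag(1) E by (auto simp: in_hom cat_simps)
  note cX = coproj(1)[OF XYZ(1) i] and cY = coproj(1)[OF XYZ(2) j] and cZ = coproj(1)[OF XYZ(3) k]
  have "Comp E (coproj Z (fam_map (Fa g) j)) (Comp E (component_arr g j) (component_arr f i)) =
      Comp E (Comp E (coproj Z (fam_map (Fa g) j)) (component_arr g j)) (component_arr f i)"
    using af(1) ag(1) cZ E by (simp add: in_hom cat_assoc)
  also have "\<dots> = Comp E g (Comp E (coproj Y j) (component_arr f i))"
    using af(1) ag(1,3) cY g E by (simp add: in_hom cat_assoc)
  also have "\<dots> = Comp E (Comp E g f) (coproj X i)"
    using af(3) cX f g E by (simp add: in_hom cat_assoc)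
  also have "\<dots> = Comp E (coproj Z (fam_map (Fa g) j)) (component_arr (Comp E g f) i)"
    using agf(3) by simp
  finally show ?thesis
    using coproj_Comp_cancel(2)[OF XYZ(3) k k comp agf(1)] coproj(3)[OF XYZ(1) i]
    by (simp add: j_def fam_single_def)
qed

definition Ko :: "'eo \<Rightarrow> ('i, 'eo) fam_obj" where
  "Ko X = (fst (Fo X), \<lambda>i\<in>fst (Fo X). component X i)"

definition Ka :: "'ea \<Rightarrow> ('i, 'eo, 'ea) fam_arr" where
  "Ka e = (Ko (Dom E e), Ko (Cod E e), fam_map (Fa e), \<lambda>i\<in>fst (Fo (Dom E e)). component_arr e i)"

lemma Ka_in_hom:
  assumes "e \<in> hom E X Y"
  shows "Ka e \<in> hom (Fam Conn) (Ko X) (Ko Y)"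
  using assms component_in_Conn component_arr_in_Conn[OF assms] Fam_ArrD(3)[of "Fa e" C]
    Fa_in_hom[OF assms] E
  by (auto simp: in_hom Ka_def Ko_def Fam_Arr_iff Fam_Obj_iff cat_simps)

lemma K_functor: "is_functor E (Fam Conn) Ko Ka"
  unfolding is_functor_def
proof (intro conjI ballI impI)
  show "is_category E" "is_category (Fam Conn)"
    using E is_category_Fam[OF is_category_full_subcategory[OF E]] by simp_all
  show "Ko X \<in> Obj (Fam Conn)" if "X \<in> Obj E" for X
    using that component_in_Conn by (auto simp: Ko_def Fam_Obj_iff)
  show "Ka f \<in> hom (Fam Conn) (Ko (Dom E f)) (Ko (Cod E f))" if "f \<in> Arr E" for f
    using Ka_in_hom that by (simp add: in_hom)
  show "Ka (Ident E X) = Ident (Fam Conn) (Ko X)" if X: "X \<in> Obj E" for X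
    using X E component_arr_Ident[OF X] fam_map_Ident[OF X] Fd(7)[OF X]
    by (auto simp: Ka_def Ko_def Fam_Ident cat_simps intro!: restrict_ext)
  show "Ka (Comp E g f) = Comp (Fam Conn) (Ka g) (Ka f)"
    if "f \<in> Arr E" "g \<in> Arr E" "Cod E f = Dom E g" for f g
  proof -
    have f: "f \<in> hom E (Dom E f) (Dom E g)" and g: "g \<in> hom E (Dom E g) (Cod E g)"
      using that by (simp_all add: in_hom)
    show ?thesis
      using that component_arr_Comp[OF f g] fam_map_Fa[OF f] Fd(8)[of f g] Fd(5)[of f] E
      by (auto simp: Ka_def Ko_def Fam_Comp cat_simps intro!: restrict_ext)
  qed
qed

lemma Fam_G_K_obj:
  assumes "X \<in> Obj E"
  shows "Fam_fo Go (Ko X) = Fo X"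
proof -
  have "snd (Fo X) \<in> extensional (fst (Fo X))" using Fd(3)[OF assms] by (simp add: Fam_Obj_iff PiE_iff)
  then show ?thesis
    using component_in_Conn(2)[OF assms]
    by (auto simp: Fam_fo_def Ko_def prod_eq_iff intro!: extensionalityI[of _ "fst (Fo X)"])
qed

lemma Fam_G_K_arr:
  assumes "e \<in> Arr E"
  shows "Fam_fa Go Ga (Ka e) = Fa e"
proof -
  have e: "e \<in> hom E (Dom E e) (Cod E e)" using assms by (simp add: in_hom)
  have "fam_cmp (Fa e) \<in> extensional (fst (Fo (Dom E e)))"
    using Fam_ArrD(4)[of "Fa e" C] Fa_in_hom[OF e] by (simp add: in_hom)
  then have "(\<lambda>i\<in>fst (Fo (Dom E e)). Ga (component_arr e i)) = fam_cmp (Fa e)"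
    using component_arr_in_Conn(2)[OF e] by (auto intro!: extensionalityI[of _ "fst (Fo (Dom E e))"])
  moreover have "Fa e = (Fo (Dom E e), Fo (Cod E e), fam_map (Fa e), fam_cmp (Fa e))"
    using Fam_arr_eq[of "Fa e" C] Fd(5,6)[OF assms] by simp
  ultimately show ?thesis
    using Fam_G_K_obj E assms by (simp add: Fam_fa_def Ka_def Ko_def cat_simps cong: restrict_cong)
qed

lemma K_faithful: "a \<in> hom E X Y \<Longrightarrow> a' \<in> hom E X Y \<Longrightarrow> Ka a = Ka a' \<Longrightarrow> a = a'"
  using eq_if_Fa_eq Fam_G_K_arr by (metis in_hom)

end

locale discrete_fibration_over_Fam_with_sums = discrete_fibration_over_Fam C E Fo Fa i0
  for C :: "('co, 'ca) category" and E :: "('eo, 'ea) category"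
    and Fo :: "'eo \<Rightarrow> ('i, 'co) fam_obj" and Fa :: "'ea \<Rightarrow> ('i, 'co, 'ca) fam_arr"
    and i0 :: 'i +
  assumes sums: "has_sums E TYPE('i)"
begin

lemma coproduct_exists:
  assumes "\<And>i. i \<in> I \<Longrightarrow> X i \<in> Obj E"
  obtains S c where "is_coproduct E (I :: 'i set) X S c"
  using sums assms unfolding has_sums_def by blast

lemma components_retract:
  assumes X: "X \<in> Obj E" and S: "is_coproduct E (fst (Fo X)) (component X) S c"
  obtains t where "t \<in> hom E X S" "\<And>i. i \<in> fst (Fo X) \<Longrightarrow> Comp E t (coproj X i) = c i"
proof -
  define I where "I = fst (Fo X)"
  note S = is_coproductD[OF S, folded I_def]
  have c: "c i \<in> hom E (component X i) S" "Fa (c i) \<in> hom (Fam C) (fam_single i0 (snd (Fo X) i)) (Fo S)"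
    if "i \<in> I" for i
    using S(2)[OF that] Fa_in_hom[OF S(2)[OF that]] coproj(3)[OF X] that by (auto simp: I_def)
  obtain h where h: "h \<in> hom E S X" "\<And>i. i \<in> I \<Longrightarrow> Comp E h (c i) = coproj X i"
    using S(3)[OF X, of "coproj X"] coproj(1)[OF X] by (auto simp: I_def)
  define k where "k = fam_copair i0 I (snd (Fo X)) (Fo S) (\<lambda>i. Fa (c i))"
  have FX: "(I, snd (Fo X)) \<in> Obj (Fam C)" "(I, snd (Fo X)) = Fo X"
    using Fd(3)[OF X] by (simp_all add: I_def)
  have k: "k \<in> hom (Fam C) (Fo X) (Fo S)"
    and k_coproj: "\<And>i. i \<in> I \<Longrightarrow> Comp (Fam C) k (fam_coproj C i0 (Fo X) i) = Fa (c i)"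
    using fam_copair_in_hom[OF C FX(1) Fd(3)[OF S(1)] c(2)] Fam_Comp_copair_coproj[OF C FX(1) Fd(3)[OF S(1)] c(2)]
    unfolding k_def FX(2) by blast+
  txt \<open>h is the comparison arrow S \<rightarrow> X; the lift of k is a section of it.\<close>
  have "Comp (Fam C) (Fa h) k = Ident (Fam C) (Fo X)"
    using Fam_copair_section[OF C FX(1), of "Fa h" "Fo S" "\<lambda>i. Fa (c i)" i0] Fa_in_hom[OF h(1)]
      c(2) Fa_Comp[OF c(1) h(1)] h(2) coproj(2)[OF X]
    unfolding k_def FX(2) by (simp add: I_def)
  note t = lift_section[OF h(1) k this]
  show ?thesis
  proof (rule that[OF t(1)])
    fix i assume i: "i \<in> fst (Fo X)"
    have "Comp E (lift S k) (coproj X i) \<in> hom E (component X i) S"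
      using t(1) coproj(1)[OF X i] E by (auto simp: in_hom cat_simps)
    moreover have "Fa (Comp E (lift S k) (coproj X i)) = Fa (c i)"
      using Fa_Comp[OF coproj(1)[OF X i] t(1)] lift(2)[OF S(1) k] coproj(2)[OF X i] k_coproj i
      by (simp add: I_def)
    ultimately show "Comp E (lift S k) (coproj X i) = c i"
      using eq_if_Fa_eq c(1)[of i] i by (simp add: I_def)
  qed
qed

lemma is_coproduct_components:
  assumes X: "X \<in> Obj E"
  shows "is_coproduct E (fst (Fo X)) (component X) X (coproj X)"
  unfolding is_coproduct_def
proof (intro conjI ballI allI impI)
  show "X \<in> Obj E" "\<And>i. i \<in> fst (Fo X) \<Longrightarrow> coproj X i \<in> hom E (component X i) X"
    using X coproj(1)[OF X] by simp_all
  fix Y g assume Y: "Y \<in> Obj E" and g: "\<forall>i\<in>fst (Fo X). g i \<in> hom E (component X i) Y"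
  obtain S c where S: "is_coproduct E (fst (Fo X)) (component X) S c"
    using coproduct_exists[of "fst (Fo X)" "component X"] coproj(4)[OF X] by blast
  obtain t where t: "t \<in> hom E X S" "\<And>i. i \<in> fst (Fo X) \<Longrightarrow> Comp E t (coproj X i) = c i"
    using components_retract[OF X S] by blast
  obtain g' where g': "g' \<in> hom E S Y" "\<And>i. i \<in> fst (Fo X) \<Longrightarrow> Comp E g' (c i) = g i"
    using is_coproductD(3)[OF S Y, of g] g by blast
  have "Comp E (Comp E g' t) (coproj X i) = g i" if "i \<in> fst (Fo X)" for i
    using cat_assoc[OF E, of "coproj X i" t g'] t g' coproj(1)[OF X that] that by (simp add: in_hom)
  moreover have "Comp E g' t \<in> hom E X Y" using t(1) g'(1) E by (auto simp: in_hom cat_simps)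
  ultimately show "\<exists>!h. h \<in> hom E X Y \<and> (\<forall>i\<in>fst (Fo X). Comp E h (coproj X i) = g i)"
    using coproj_jointly_epi by (metis (no_types, lifting))
qed

lemma K_full:
  assumes X: "X \<in> Obj E" and Y: "Y \<in> Obj E" and b: "b \<in> hom (Fam Conn) (Ko X) (Ko Y)"
  shows "\<exists>e\<in>hom E X Y. Ka e = b"
proof -
  note bD = Fam_ArrD[of b Conn]
  have f: "fam_map b i \<in> fst (Fo Y)"
    and d: "fam_cmp b i \<in> hom E (component X i) (component Y (fam_map b i))" if "i \<in> fst (Fo X)" for i
    using bD(3) bD(5)[of i] b that by (auto simp: in_hom Ko_def)
  have "Comp E (coproj Y (fam_map b i)) (fam_cmp b i) \<in> hom E (component X i) Y" if "i \<in> fst (Fo X)" for i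
    using d[OF that] coproj(1)[OF Y f[OF that]] E by (auto simp: in_hom cat_simps)
  then obtain e where e: "e \<in> hom E X Y"
    and e_coproj: "\<And>i. i \<in> fst (Fo X) \<Longrightarrow>
      Comp E e (coproj X i) = Comp E (coproj Y (fam_map b i)) (fam_cmp b i)"
    using is_coproductD(3)[OF is_coproduct_components[OF X] Y,
        of "\<lambda>i. Comp E (coproj Y (fam_map b i)) (fam_cmp b i)"] by auto
  have "fam_map (Fa e) i = fam_map b i \<and> component_arr e i = fam_cmp b i" if i: "i \<in> fst (Fo X)" for i
    using coproj_Comp_cancel[OF Y fam_map_Fa[OF e i] f[OF i] component_arr(1)[OF e i] d[OF i]]
      component_arr(3)[OF e i] e_coproj[OF i] coproj(3)[OF X i] by (simp add: fam_single_def)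
  then have "Ka e = b"
    using Ka_in_hom[OF e] b bD(3,4) Fam_ArrD(3)[of "Fa e" C] Fa_in_hom[OF e]
    by (intro Fam_arr_eqI[of _ Conn]) (auto simp: in_hom Ka_def Ko_def PiE_iff)
  then show ?thesis using e by blast
qed

lemma K_surj:
  assumes "Z \<in> Obj (Fam Conn)"
  shows "\<exists>X\<in>Obj E. Ko X = Z"
proof -
  obtain I Xs where Z: "Z = (I, Xs)" and Xs: "Xs \<in> I \<rightarrow>\<^sub>E Obj Conn"
    using assms by (cases Z) (simp add: Fam_Obj_iff)
  obtain S c where S: "is_coproduct E I Xs S c"
    using coproduct_exists[of I Xs] Xs by auto
  note S = is_coproductD[OF S]
  have c: "Fa (c i) \<in> hom (Fam C) (fam_single i0 (Go (Xs i))) (Fo S)" if "i \<in> I" for i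
    using Fa_in_hom[OF S(2)[OF that]] Fo_Conn[of "Xs i"] PiE_mem[OF Xs that] by simp
  define A where "A = (\<lambda>i\<in>I. Go (Xs i))"
  have A: "(I, A) \<in> Obj (Fam C)"
    using G_functor Xs by (auto simp: A_def Fam_Obj_iff is_functor_def)
  define h where "h = fam_copair i0 I A (Fo S) (\<lambda>i. Fa (c i))"
  have h: "h \<in> hom (Fam C) (I, A) (Fo S)"
    and h_coproj: "\<And>i. i \<in> I \<Longrightarrow> Comp (Fam C) h (fam_coproj C i0 (I, A) i) = Fa (c i)"
    using fam_copair_in_hom[OF C A Fd(3)[OF S(1)]] Fam_Comp_copair_coproj[OF C A Fd(3)[OF S(1)]] c
    unfolding h_def A_def by auto
  note l = lift[OF S(1) h]
  define X where "X = Dom E (lift S h)"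
  have X: "X \<in> Obj E" using l(1) E by (auto simp: X_def in_hom cat_simps)
  have "component X i = Xs i" if i: "i \<in> I" for i
  proof -
    have i': "i \<in> fst (Fo X)" using l(3) i by (simp add: X_def)
    have "Comp E (lift S h) (coproj X i) \<in> hom E (component X i) S"
      using l(1) coproj(1)[OF X i'] E by (auto simp: in_hom cat_simps X_def)
    moreover have "Fa (Comp E (lift S h) (coproj X i)) = Fa (c i)"
      using Fa_Comp[OF coproj(1)[OF X i']] l coproj(2)[OF X i'] h_coproj[OF i] by (simp add: X_def)
    ultimately have "Comp E (lift S h) (coproj X i) = c i"
      using eq_if_Fa_eq S(2)[OF i] by blast
    then show ?thesis
      using coproj(1)[OF X i'] l(1) S(2)[OF i] E by (metis cat_comp_dom in_hom X_def)
  qed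
  then have "Ko X = Z"
    using l(3) Xs by (auto simp: Ko_def Z X_def PiE_iff intro!: extensionalityI[of _ I])
  then show ?thesis using X by blast
qed

lemma K_equivalence: "is_equivalence E (Fam Conn) Ko Ka"
proof -
  interpret fully_faithful_surjective E "Fam Conn" Ko Ka
    using K_functor K_faithful K_full K_surj by unfold_locales (auto simp: in_hom cat_simps E)
  show ?thesis by (rule is_equivalence_K)
qed

lemma F_nat_iso_Fam_G_K:
  "nat_iso E (Fam C) Fo Fa (Fam_fo Go \<circ> Ko) (Fam_fa Go Ga \<circ> Ka) (\<lambda>X. Ident (Fam C) (Fo X))"
  by (rule nat_iso_Ident[OF F_functor]) (simp_all add: Fam_G_K_obj Fam_G_K_arr)

end

theorem proposition2p5:
  fixes C :: "('co, 'ca) category"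
    and E :: "('eo, 'ea) category"
    and Fo :: "'eo \<Rightarrow> ('i, 'co) fam_obj"
    and Fa :: "'ea \<Rightarrow> ('i, 'co, 'ca) fam_arr"
  assumes "is_category C"
    and "is_category E"
    and "has_sums E TYPE('i)"
    and "preserves_sums E (Fam C) Fo Fa TYPE('i)"
    and "is_discrete_fibration E (Fam C) Fo Fa"
  shows "\<exists>(D :: ('eo, 'ea) category) (Go :: 'eo \<Rightarrow> 'co) (Ga :: 'ea \<Rightarrow> 'ca)
            (Ko :: 'eo \<Rightarrow> ('i, 'eo) fam_obj) (Ka :: 'ea \<Rightarrow> ('i, 'eo, 'ea) fam_arr) phi.
           is_discrete_fibration D C Go Ga \<and>
           is_equivalence E (Fam D) Ko Ka \<and>
           nat_iso E (Fam C) Fo Fa (Fam_fo Go \<circ> Ko) (Fam_fa Go Ga \<circ> Ka) phi"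
proof -
  txt \<open>Any index serves as i0, and sum preservation is not used (see is_coproduct_components).\<close>
  interpret discrete_fibration_over_Fam_with_sums C E Fo Fa undefined
    using assms(1,2,3,5) by unfold_locales
  show ?thesis
    using G_discrete_fibration K_equivalence F_nat_iso_Fam_G_K by blast
qed

end
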